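(* Let $M\cong\mathbb Z^d$, $\Sigma$, $v_1,\ldots,v_n$, $\mathcal A$, $\bar M$, $\bar N$, $\mathbf v_0,\ldots,\mathbf v_n$, $K$ and $\Psi_{\mathbf p}$ be as in the context, with $\mathbb P_\Sigma$ nef-Fano. Then for every $\mathbf p\in K\cap\bar M$ and every $\mathbf n\in\bar N=\mathrm{Hom}(\bar M,\mathbb Z)$, $$\sum_{i=0}^na_i(\mathbf n\cdot\mathbf v_i)\Psi_{\mathbf p+\mathbf v_i}=0,$$ where $a_0=1$.
   Context: $M\cong\mathbb Z^d$ is a lattice with dual $N$; $\Sigma$ is a complete simplicial fan in $M_{\mathbb R}$ with minimal ray generators $v_1,\ldots,v_n$; $\mathbb P_\Sigma$ is nef-Fano (in particular every $v_i$ lies on the boundary of $\mathrm{conv}(v_1,\ldots,v_n)$). For $k\ge0$, $A_k$ is the quotient of $\mathbb C[D_1,\ldots,D_n]$ by the linear elements $\sum_i(\lambda\cdot v_i)D_i$ ($\lambda\in N$) and the monomials $\prod_iD_i^{r_i}$ such that no cone of $\Sigma$ contains all $v_i$ with $r_i>k$; $\mathcal A$ is the direct limit of the $A_k$ under the maps $A_k\to A_{k+l}$ given by multiplication by $\prod_iD_i^l$. Put $D_0=-\sum_iD_i$. Let $\bar M=M\oplus\mathbb Z$, $\mathbf v_i=v_i\oplus1$ ($1\le i\le n$), $\mathbf v_0=\mathbf 0\oplus1$, $K$ the cone spanned by $\mathbf v_0,\ldots,\mathbf v_n$. For $\beta=(b_0,\ldots,b_n)\in\mathbb Z^{n+1}$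 with $b_0\le0$, $\Phi_\beta\in\mathcal A$ is the image of $D_0^{-b_0}\prod_{i=1}^nD_i^{k-b_i}\in A_k$ for $k\ge\max_ib_i$. For $\mathbf p\in K\cap\bar M$, $\Psi_{\mathbf p}=\sum_{\beta:\sum_{i=0}^nb_i\mathbf v_i=-\mathbf p,\ b_0\le0}\Phi_\beta\prod_{i=1}^na_i^{b_i}$, a formal Laurent series in $a_1,\ldots,a_n$ with coefficients in $\mathcal A$. *)

theory Defs
  imports "HOL-Analysis.Analysis" "HOL-Library.Poly_Mapping"
begin

text \<open>M = int^'d, N = int^'d (dual via the standard pairing); rays v_1..v_n
  are indexed by {1..n}; a fan is a set of index sets (cones spanned by the v_i, i in S).\<close>

definition lpair :: "int^'d \<Rightarrow> int^'d \<Rightarrow> int" where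
  "lpair l x = (\<Sum>j\<in>UNIV. l$j * x$j)"

definition rvec :: "int^'d \<Rightarrow> real^'d" where
  "rvec x = (\<chi> j. of_int (x$j))"

definition scone :: "(nat \<Rightarrow> int^'d) \<Rightarrow> nat set \<Rightarrow> (real^'d) set" where
  "scone v S = {x. \<exists>\<mu>. (\<forall>i\<in>S. \<mu> i \<ge> 0) \<and> x = (\<Sum>i\<in>S. \<mu> i *\<^sub>R rvec (v i))}"

definition primitive_vec :: "int^'d \<Rightarrow> bool" where
  "primitive_vec x \<longleftrightarrow> x \<noteq> 0 \<and> (\<forall>(t::int) w. x = t *s w \<longrightarrow> \<bar>t\<bar> = 1)"

definition complete_simplicial_fan :: "nat \<Rightarrow> (nat \<Rightarrow> int^'d) \<Rightarrow> nat set set \<Rightarrow> bool" where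
  "complete_simplicial_fan n v \<Sigma> \<longleftrightarrow>
     (\<forall>S\<in>\<Sigma>. S \<subseteq> {1..n}) \<and>
     (\<forall>S\<in>\<Sigma>. \<forall>T. T \<subseteq> S \<longrightarrow> T \<in> \<Sigma>) \<and>
     (\<forall>i\<in>{1..n}. {i} \<in> \<Sigma>) \<and>
     (\<forall>S\<in>\<Sigma>. inj_on (\<lambda>i. rvec (v i)) S \<and> independent ((\<lambda>i. rvec (v i)) ` S)) \<and>
     (\<forall>S\<in>\<Sigma>. \<forall>T\<in>\<Sigma>. scone v S \<inter> scone v T = scone v (S \<inter> T)) \<and>
     (\<Union>S\<in>\<Sigma>. scone v S) = UNIV \<and>
     (\<forall>i\<in>{1..n}. primitive_vec (v i))"

definition max_cone :: "nat set set \<Rightarrow> nat set \<Rightarrow> bool" where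
  "max_cone \<Sigma> S \<longleftrightarrow> S \<in> \<Sigma> \<and> (\<forall>T\<in>\<Sigma>. S \<subseteq> T \<longrightarrow> T = S)"

text \<open>P_Sigma projective: some torus-invariant R-divisor sum h_i D_i has strictly convex
  support function.\<close>
definition projective_fan :: "nat \<Rightarrow> (nat \<Rightarrow> int^'d) \<Rightarrow> nat set set \<Rightarrow> bool" where
  "projective_fan n v \<Sigma> \<longleftrightarrow> (\<exists>h::nat \<Rightarrow> real. \<forall>S. max_cone \<Sigma> S \<longrightarrow>
     (\<exists>u::real^'d. (\<forall>i\<in>S. u \<bullet> rvec (v i) = h i) \<and> (\<forall>j\<in>{1..n} - S. u \<bullet> rvec (v j) < h j)))"

text \<open>-K = sum D_i is nef: its support function is convex.\<close>
definition anticanonical_nef :: "nat \<Rightarrow> (nat \<Rightarrow> int^'d) \<Rightarrow> nat set set \<Rightarrow> bool" where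
  "anticanonical_nef n v \<Sigma> \<longleftrightarrow> (\<forall>S. max_cone \<Sigma> S \<longrightarrow>
     (\<exists>u::real^'d. (\<forall>i\<in>S. u \<bullet> rvec (v i) = 1) \<and> (\<forall>j\<in>{1..n}. u \<bullet> rvec (v j) \<le> 1)))"

definition nef_Fano :: "nat \<Rightarrow> (nat \<Rightarrow> int^'d) \<Rightarrow> nat set set \<Rightarrow> bool" where
  "nef_Fano n v \<Sigma> \<longleftrightarrow> projective_fan n v \<Sigma> \<and> anticanonical_nef n v \<Sigma>"

type_synonym cpoly = "(nat \<Rightarrow>\<^sub>0 nat) \<Rightarrow>\<^sub>0 complex"

definition Dvar :: "nat \<Rightarrow> cpoly" where
  "Dvar i = Poly_Mapping.single (Poly_Mapping.single i 1) 1"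

definition D0 :: "nat \<Rightarrow> cpoly" where
  "D0 n = - (\<Sum>i=1..n. Dvar i)"

definition Dprod :: "nat \<Rightarrow> cpoly" where
  "Dprod n = (\<Prod>i=1..n. Dvar i)"

definition ideal_gen :: "'a::comm_ring_1 set \<Rightarrow> 'a set" where
  "ideal_gen G = {x. \<exists>F h. finite F \<and> F \<subseteq> G \<and> x = (\<Sum>g\<in>F. h g * g)}"

definition Aideal :: "nat \<Rightarrow> (nat \<Rightarrow> int^'d) \<Rightarrow> nat set set \<Rightarrow> nat \<Rightarrow> cpoly set" where
  "Aideal n v \<Sigma> k = ideal_gen
     ({(\<Sum>i=1..n. of_int (lpair l (v i)) * Dvar i) | l. True} \<union>
      {(\<Prod>i=1..n. Dvar i ^ r i) | r::nat \<Rightarrow> nat.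
          \<not> (\<exists>S\<in>\<Sigma>. {i\<in>{1..n}. r i > k} \<subseteq> S)})"

text \<open>Elements of the direct limit are represented by pairs (k, f), f a representative of an
  element of A_k; (k,f) is identified with (k+l, f * (D_1...D_n)^l).\<close>
type_synonym alim = "nat \<times> cpoly"

definition alim_zero :: "nat \<Rightarrow> (nat \<Rightarrow> int^'d) \<Rightarrow> nat set set \<Rightarrow> alim \<Rightarrow> bool" where
  "alim_zero n v \<Sigma> x \<longleftrightarrow> (\<exists>l. snd x * Dprod n ^ l \<in> Aideal n v \<Sigma> (fst x + l))"

definition alim_smult :: "int \<Rightarrow> alim \<Rightarrow> alim" where
  "alim_smult c x = (fst x, of_int c * snd x)"

definition alim_sum :: "nat \<Rightarrow> (nat \<Rightarrow> alim) \<Rightarrow> nat set \<Rightarrow> alim" where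
  "alim_sum n F I = (let m = Max (fst ` F ` I) in
      (m, \<Sum>i\<in>I. snd (F i) * Dprod n ^ (m - fst (F i))))"

definition Phi :: "nat \<Rightarrow> int \<Rightarrow> (nat \<Rightarrow> int) \<Rightarrow> alim" where
  "Phi n b0 b = (let k = Max ({0} \<union> b ` {1..n}) in
     (nat k, D0 n ^ nat (- b0) * (\<Prod>i=1..n. Dvar i ^ nat (k - b i))))"

text \<open>Mbar = M x Z, Nbar = N x Z.\<close>
definition vbar :: "(nat \<Rightarrow> int^'d) \<Rightarrow> nat \<Rightarrow> (int^'d) \<times> int" where
  "vbar v i = (if i = 0 then (0, 1) else (v i, 1))"

definition bpair :: "(int^'d) \<times> int \<Rightarrow> (int^'d) \<times> int \<Rightarrow> int" where
  "bpair nn x = lpair (fst nn) (fst x) + snd nn * snd x"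

definition in_K :: "nat \<Rightarrow> (nat \<Rightarrow> int^'d) \<Rightarrow> (int^'d) \<times> int \<Rightarrow> bool" where
  "in_K n v p \<longleftrightarrow> (\<exists>\<mu>::nat \<Rightarrow> real. (\<forall>i\<in>{0..n}. \<mu> i \<ge> 0) \<and>
      rvec (fst p) = (\<Sum>i\<in>{0..n}. \<mu> i *\<^sub>R rvec (fst (vbar v i))) \<and>
      of_int (snd p) = (\<Sum>i\<in>{0..n}. \<mu> i))"

text \<open>Coefficient of the monomial prod_{i=1}^n a_i^(c_i) in Psi_p (a formal Laurent series in
  a_1..a_n with coefficients in the direct limit).  The unique beta contributing has
  (b_1..b_n) = c and b_0 determined by the last coordinate.\<close>
definition Psi_coeff :: "nat \<Rightarrow> (nat \<Rightarrow> int^'d) \<Rightarrow> (int^'d) \<times> int \<Rightarrow> (nat \<Rightarrow> int) \<Rightarrow> alim" where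
  "Psi_coeff n v p c = (let b0 = - snd p - (\<Sum>i=1..n. c i) in
     if b0 \<le> 0 \<and> (\<Sum>i=1..n. c i *s v i) = - fst p then Phi n b0 c else (0, 0))"

end

theory Submission
  imports Defs
begin

(* The coefficient of a^c in the i-th summand is (nn . vbar_i) Phi_beta, where (b_1..b_n) is c,
   lowered by one at i for i > 0 (the factor a_i), and b_0 = B - 1 for i = 0, b_0 = B otherwise,
   with B = -snd p - sum_j c_j; it vanishes unless b_0 <= 0 and sum_j c_j v_j = -fst p.
   Lift all summands to a common A_m.
   If B <= 0 all summands are present: with Q = D_0^(-B) prod_j D_j^(m - c_j) the i-th one is
   (nn . vbar_i) D_i Q, resp. (nn . vbar_0) D_0 Q, and since D_0 = -sum_i D_i they add up to
   Q sum_i (l . v_i) D_i for nn = (l, s), a multiple of a linear generator of the ideal.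
   If B = 1 only the summand i = 0 survives, the monomial prod_j D_j^(m - c_j), whose
   exponents exceeding m are those with c_j < 0.  If these rays lay in one cone, nefness
   of the anticanonical divisor would give a linear form u <= 1 on all rays and = 1 on them,
   whence -sum_j c_j <= u(-sum_j c_j v_j) = u(fst p) <= snd p as p lies in K, i.e. B <= 0.
   So the monomial is a generator of the ideal.  In all other cases every summand vanishes. *)

lemma ideal_gen_0: "0 \<in> ideal_gen G"
  unfolding ideal_gen_def by (rule CollectI, rule exI[of _ "{}"]) simp

lemma ideal_gen_mult: "g \<in> G \<Longrightarrow> x * g \<in> ideal_gen G"
  unfolding ideal_gen_def
  by (rule CollectI, rule exI[of _ "{g}"], rule exI[of _ "\<lambda>_. x"]) simp

lemma sum_fun_upd:
  fixes g :: "nat \<Rightarrow> 'b \<Rightarrow> 'a::ab_group_add"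
  assumes "finite I" "i \<in> I"
  shows "(\<Sum>j\<in>I. g j ((b(i := x)) j)) = (\<Sum>j\<in>I. g j (b j)) - g i (b i) + g i x"
proof -
  have "(\<Sum>j\<in>I - {i}. g j ((b(i := x)) j)) = (\<Sum>j\<in>I - {i}. g j (b j))"
    by (rule sum.cong) auto
  then show ?thesis
    using assms by (simp add: sum.remove algebra_simps)
qed

lemma rvec_uminus: "rvec (- x) = - rvec x"
  by (simp add: rvec_def vec_eq_iff)

lemma rvec_sum: "rvec (\<Sum>j\<in>I. f j) = (\<Sum>j\<in>I. rvec (f j))"
  by (simp add: rvec_def vec_eq_iff)

lemma rvec_smult: "rvec (a *s x) = of_int a *\<^sub>R rvec x"
  by (simp add: rvec_def vec_eq_iff)

lemma zero_in_Aideal: "0 \<in> Aideal n v \<Sigma> k"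
  unfolding Aideal_def by (rule ideal_gen_0)

lemma linear_relation_in_Aideal:
  "q * (\<Sum>i=1..n. of_int (lpair l (v i)) * Dvar i) \<in> Aideal n v \<Sigma> k"
  unfolding Aideal_def by (rule ideal_gen_mult) blast

lemma monomial_in_Aideal:
  assumes "\<not> (\<exists>S\<in>\<Sigma>. {i\<in>{1..n}. r i > k} \<subseteq> S)"
  shows "q * (\<Prod>i=1..n. Dvar i ^ r i) \<in> Aideal n v \<Sigma> k"
  unfolding Aideal_def using assms by (intro ideal_gen_mult) blast

(* the image of x in A_m; meaningful only for fst x \<le> m, the subtraction being truncated *)
definition alim_rep :: "nat \<Rightarrow> nat \<Rightarrow> alim \<Rightarrow> cpoly" where
  "alim_rep n m x = snd x * Dprod n ^ (m - fst x)"

lemma alim_rep_smult: "alim_rep n m (alim_smult t x) = of_int t * alim_rep n m x"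
  by (simp add: alim_rep_def alim_smult_def)

lemma alim_rep_zero: "alim_rep n m (0, 0) = 0"
  by (simp add: alim_rep_def)

lemma alim_zero_alim_sum:
  assumes "finite I"
    and "\<And>m. \<forall>i\<in>I. fst (F i) \<le> m \<Longrightarrow> (\<Sum>i\<in>I. alim_rep n m (F i)) \<in> Aideal n v \<Sigma> m"
  shows "alim_zero n v \<Sigma> (alim_sum n F I)"
proof -
  let ?m = "Max (fst ` F ` I)"
  have "\<forall>i\<in>I. fst (F i) \<le> ?m"
    using assms(1) by simp
  then have "(\<Sum>i\<in>I. alim_rep n ?m (F i)) \<in> Aideal n v \<Sigma> ?m"
    by (rule assms(2))
  then show ?thesis
    unfolding alim_zero_def alim_sum_def alim_rep_def Let_def by (intro exI[of _ 0]) simp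
qed

definition Phi_rep :: "nat \<Rightarrow> nat \<Rightarrow> int \<Rightarrow> (nat \<Rightarrow> int) \<Rightarrow> cpoly" where
  "Phi_rep n m b0 b = D0 n ^ nat (- b0) * (\<Prod>j=1..n. Dvar j ^ nat (int m - b j))"

lemma le_fst_Phi: "j \<in> {1..n} \<Longrightarrow> b j \<le> int (fst (Phi n b0 b))"
proof -
  assume j: "j \<in> {1..n}"
  have "b j \<le> Max ({0} \<union> b ` {1..n})"
    using j by (intro Max_ge) auto
  then show ?thesis
    by (simp add: Phi_def Let_def)
qed

lemma alim_rep_Phi:
  assumes "fst (Phi n b0 b) \<le> m"
  shows "alim_rep n m (Phi n b0 b) = Phi_rep n m b0 b"
proof -
  define k where "k = Max ({0} \<union> b ` {1..n})"
  have k0: "0 \<le> k"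
    unfolding k_def by (rule Max_ge) auto
  have kb: "b j \<le> k" if "j \<in> {1..n}" for j
    unfolding k_def by (rule Max_ge) (use that in auto)
  have km: "nat k \<le> m"
    using assms by (simp add: Phi_def Let_def k_def)
  have "(\<Prod>j=1..n. Dvar j ^ nat (k - b j)) * Dprod n ^ (m - nat k)
      = (\<Prod>j=1..n. Dvar j ^ (nat (k - b j) + (m - nat k)))"
    by (simp add: Dprod_def prod_power_distrib power_add prod.distrib)
  also have "\<dots> = (\<Prod>j=1..n. Dvar j ^ nat (int m - b j))"
  proof (rule prod.cong[OF refl])
    fix j assume "j \<in> {1..n}"
    then have "nat (k - b j) + (m - nat k) = nat (int m - b j)"
      using kb k0 km by fastforce
    then show "Dvar j ^ (nat (k - b j) + (m - nat k)) = Dvar j ^ nat (int m - b j)"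
      by simp
  qed
  finally show ?thesis
    by (simp add: alim_rep_def Phi_def Phi_rep_def Let_def k_def mult.assoc)
qed

lemma Phi_rep_pred_b0:
  assumes "b0 \<le> 0"
  shows "Phi_rep n m (b0 - 1) b = D0 n * Phi_rep n m b0 b"
proof -
  have "nat (- (b0 - 1)) = Suc (nat (- b0))"
    using assms by linarith
  then show ?thesis
    by (simp add: Phi_rep_def)
qed

lemma Phi_rep_fun_upd_pred:
  assumes i: "i \<in> {1..n}" and bi: "b i \<le> int m"
  shows "Phi_rep n m b0 (b(i := b i - 1)) = Dvar i * Phi_rep n m b0 b"
proof -
  have "(\<Prod>j\<in>{1..n} - {i}. Dvar j ^ nat (int m - (b(i := b i - 1)) j))
      = (\<Prod>j\<in>{1..n} - {i}. Dvar j ^ nat (int m - b j))"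
    by (rule prod.cong) auto
  moreover have "nat (int m - (b i - 1)) = Suc (nat (int m - b i))"
    using bi by linarith
  ultimately show ?thesis
    using i by (simp add: Phi_rep_def prod.remove mult_ac)
qed

(* the M-part and the last coordinate of the condition sum_i b_i vbar_i = -q on beta = (b_0, b)
   in the definition of Psi_q *)
definition ray_sum_matches :: "nat \<Rightarrow> (nat \<Rightarrow> int^'d) \<Rightarrow> (int^'d) \<times> int \<Rightarrow> (nat \<Rightarrow> int) \<Rightarrow> bool" where
  "ray_sum_matches n v q b \<longleftrightarrow> (\<Sum>i=1..n. b i *s v i) = - fst q"

definition Psi_b0 :: "nat \<Rightarrow> (int^'d) \<times> int \<Rightarrow> (nat \<Rightarrow> int) \<Rightarrow> int" where
  "Psi_b0 n q b = - snd q - (\<Sum>i=1..n. b i)"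

lemma Psi_coeff_eq:
  "Psi_coeff n v q b =
     (if Psi_b0 n q b \<le> 0 \<and> ray_sum_matches n v q b then Phi n (Psi_b0 n q b) b else (0, 0))"
  by (simp add: Psi_coeff_def Psi_b0_def ray_sum_matches_def Let_def)

lemma Psi_b0_apex_shift: "Psi_b0 n (p + vbar v 0) b = Psi_b0 n p b - 1"
  by (simp add: Psi_b0_def vbar_def)

lemma ray_sum_matches_apex_shift:
  "ray_sum_matches n v (p + vbar v 0) b \<longleftrightarrow> ray_sum_matches n v p b"
  by (simp add: ray_sum_matches_def vbar_def)

lemma Psi_b0_ray_shift:
  "i \<in> {1..n} \<Longrightarrow> Psi_b0 n (p + vbar v i) (b(i := b i - 1)) = Psi_b0 n p b"
  using sum_fun_upd[of "{1..n}" i "\<lambda>_ x. x" b "b i - 1"]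
  by (simp add: Psi_b0_def vbar_def)

lemma ray_sum_matches_ray_shift:
  assumes "i \<in> {1..n}"
  shows "ray_sum_matches n v (p + vbar v i) (b(i := b i - 1)) \<longleftrightarrow> ray_sum_matches n v p b"
proof -
  have "(\<Sum>j=1..n. (b(i := b i - 1)) j *s v j) = (\<Sum>j=1..n. b j *s v j) - v i"
    using assms sum_fun_upd[of "{1..n}" i "\<lambda>j x. x *s v j" b "b i - 1"]
    by (simp add: vector_sub_rdistrib)
  then show ?thesis
    using assms by (auto simp: ray_sum_matches_def vbar_def algebra_simps)
qed

(* the coefficient of a^c in a_i (nn . vbar_i) Psi_(p + vbar_i), where a_0 = 1 *)
definition relation_term ::
    "nat \<Rightarrow> (nat \<Rightarrow> int^'d) \<Rightarrow> (int^'d) \<times> int \<Rightarrow> (int^'d) \<times> int \<Rightarrow> (nat \<Rightarrow> int) \<Rightarrow> nat \<Rightarrow> alim" where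
  "relation_term n v nn p c i = alim_smult (bpair nn (vbar v i))
     (Psi_coeff n v (p + vbar v i) (if i = 0 then c else c(i := c i - 1)))"

lemma relation_term_apex:
  "relation_term n v nn p c 0 = alim_smult (snd nn)
     (if Psi_b0 n p c \<le> 1 \<and> ray_sum_matches n v p c then Phi n (Psi_b0 n p c - 1) c else (0, 0))"
  unfolding relation_term_def Psi_coeff_eq Psi_b0_apex_shift ray_sum_matches_apex_shift
  by (simp add: bpair_def vbar_def lpair_def)

lemma relation_term_ray:
  assumes i: "i \<in> {1..n}"
  shows "relation_term n v nn p c i = alim_smult (lpair (fst nn) (v i) + snd nn)
     (if Psi_b0 n p c \<le> 0 \<and> ray_sum_matches n v p c then Phi n (Psi_b0 n p c) (c(i := c i - 1))
      else (0, 0))"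
proof -
  have "i \<noteq> 0"
    using i by simp
  then show ?thesis
    unfolding relation_term_def Psi_coeff_eq
    by (simp add: Psi_b0_ray_shift[OF i] ray_sum_matches_ray_shift[OF i]) (simp add: bpair_def vbar_def)
qed

lemma complete_simplicial_fan_finite: "complete_simplicial_fan n v \<Sigma> \<Longrightarrow> finite \<Sigma>"
proof -
  assume "complete_simplicial_fan n v \<Sigma>"
  then have "\<forall>S\<in>\<Sigma>. S \<subseteq> {1..n}"
    unfolding complete_simplicial_fan_def by (rule conjunct1)
  then have "\<Sigma> \<subseteq> Pow {1..n}"
    by blast
  then show "finite \<Sigma>"
    by (rule finite_subset) simp
qed

lemma max_cone_containing:
  assumes "finite \<Sigma>" "S \<in> \<Sigma>"
  obtains T where "max_cone \<Sigma> T" "S \<subseteq> T"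
proof -
  let ?above = "{T\<in>\<Sigma>. S \<subseteq> T}"
  have "finite ?above" "?above \<noteq> {}"
    using assms by auto
  then obtain T where T: "T \<in> ?above" and maximal: "\<forall>U\<in>?above. T \<le> U \<longrightarrow> T = U"
    using finite_has_maximal[of ?above] by blast
  have "max_cone \<Sigma> T"
    unfolding max_cone_def using T maximal by blast
  then show ?thesis
    using that T by blast
qed

lemma in_K_inner_le:
  assumes "in_K n v p" and le1: "\<forall>j\<in>{1..n}. u \<bullet> rvec (v j) \<le> 1"
  shows "u \<bullet> rvec (fst p) \<le> of_int (snd p)"
proof -
  obtain \<mu> where \<mu>_nonneg: "\<forall>i\<in>{0..n}. \<mu> i \<ge> 0"
    and fst_p: "rvec (fst p) = (\<Sum>i\<in>{0..n}. \<mu> i *\<^sub>R rvec (fst (vbar v i)))"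
    and snd_p: "of_int (snd p) = (\<Sum>i\<in>{0..n}. \<mu> i)"
    using assms(1) unfolding in_K_def by blast
  have "u \<bullet> rvec (fst p) = (\<Sum>i\<in>{0..n}. \<mu> i * (u \<bullet> rvec (fst (vbar v i))))"
    by (simp add: fst_p inner_sum_right)
  also have "\<dots> \<le> (\<Sum>i\<in>{0..n}. \<mu> i)"
  proof (rule sum_mono)
    fix i assume i: "i \<in> {0..n}"
    have "rvec (fst (vbar v 0)) = 0"
      by (simp add: vbar_def rvec_def vec_eq_iff)
    then have "u \<bullet> rvec (fst (vbar v i)) \<le> 1"
      using le1 i by (cases "i = 0") (auto simp: vbar_def)
    then show "\<mu> i * (u \<bullet> rvec (fst (vbar v i))) \<le> \<mu> i"
      using \<mu>_nonneg i mult_left_mono[of _ 1 "\<mu> i"] by auto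
  qed
  finally show ?thesis
    using snd_p by simp
qed

lemma inner_rvec_ray_sum_le:
  fixes c :: "nat \<Rightarrow> int"
  assumes le1: "\<forall>j\<in>{1..n}. u \<bullet> rvec (v j) \<le> 1"
    and eq1: "\<forall>j\<in>{1..n}. c j < 0 \<longrightarrow> u \<bullet> rvec (v j) = 1"
  shows "u \<bullet> rvec (\<Sum>j=1..n. c j *s v j) \<le> of_int (\<Sum>j=1..n. c j)"
proof -
  have "u \<bullet> rvec (\<Sum>j=1..n. c j *s v j) = (\<Sum>j=1..n. of_int (c j) * (u \<bullet> rvec (v j)))"
    by (simp add: rvec_sum rvec_smult inner_sum_right)
  also have "\<dots> \<le> (\<Sum>j=1..n. of_int (c j))"
  proof (rule sum_mono)
    fix j assume j: "j \<in> {1..n}"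
    show "of_int (c j) * (u \<bullet> rvec (v j)) \<le> of_int (c j)"
    proof (cases "c j < 0")
      case True
      then show ?thesis using eq1 j by simp
    next
      case False
      then show ?thesis
        using le1 j mult_left_mono[of "u \<bullet> rvec (v j)" 1 "of_int (c j)"] by simp
    qed
  qed
  finally show ?thesis
    by simp
qed

lemma Psi_b0_nonpos_if_negative_support_in_cone:
  assumes "finite \<Sigma>" "anticanonical_nef n v \<Sigma>" "in_K n v p" "ray_sum_matches n v p c"
    and "S \<in> \<Sigma>" "{j\<in>{1..n}. c j < 0} \<subseteq> S"
  shows "Psi_b0 n p c \<le> 0"
proof -
  obtain T where "max_cone \<Sigma> T" "S \<subseteq> T"
    using max_cone_containing assms(1,5) by blast
  then obtain u where on_T: "\<forall>i\<in>T. u \<bullet> rvec (v i) = 1" and le1: "\<forall>j\<in>{1..n}. u \<bullet> rvec (v j) \<le> 1"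
    using assms(2) unfolding anticanonical_nef_def by blast
  have "\<forall>j\<in>{1..n}. c j < 0 \<longrightarrow> u \<bullet> rvec (v j) = 1"
    using on_T assms(6) \<open>S \<subseteq> T\<close> by blast
  then have upper: "u \<bullet> rvec (\<Sum>j=1..n. c j *s v j) \<le> of_int (\<Sum>j=1..n. c j)"
    by (rule inner_rvec_ray_sum_le[OF le1])
  have "fst p = - (\<Sum>j=1..n. c j *s v j)"
    using assms(4) unfolding ray_sum_matches_def by simp
  then have lower: "- (u \<bullet> rvec (\<Sum>j=1..n. c j *s v j)) \<le> of_int (snd p)"
    using in_K_inner_le[OF assms(3) le1] by (simp add: rvec_uminus)
  show ?thesis
    using upper lower unfolding Psi_b0_def by linarith
qed

lemma relation_rep_linear:
  assumes b0: "Psi_b0 n p c \<le> 0" and matches: "ray_sum_matches n v p c"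
    and bound: "\<forall>i\<in>{0..n}. fst (relation_term n v nn p c i) \<le> m"
  shows "(\<Sum>i\<in>{0..n}. alim_rep n m (relation_term n v nn p c i))
       = Phi_rep n m (Psi_b0 n p c) c * (\<Sum>i=1..n. of_int (lpair (fst nn) (v i)) * Dvar i)"
proof -
  define B where "B = Psi_b0 n p c"
  define Q where "Q = Phi_rep n m B c"
  have apex: "relation_term n v nn p c 0 = alim_smult (snd nn) (Phi n (B - 1) c)"
    using b0 matches by (simp add: relation_term_apex B_def)
  then have apex_bound: "fst (Phi n (B - 1) c) \<le> m"
    using bound by (force simp: alim_smult_def)
  have c_bound: "c j \<le> int m" if "j \<in> {1..n}" for j
    using le_fst_Phi[OF that, of c "B - 1"] apex_bound by linarith
  have "alim_rep n m (relation_term n v nn p c 0) = of_int (snd nn) * (D0 n * Q)"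
    using b0 apex apex_bound
    by (simp add: alim_rep_smult alim_rep_Phi Phi_rep_pred_b0 Q_def B_def)
  moreover have "alim_rep n m (relation_term n v nn p c i)
      = of_int (lpair (fst nn) (v i) + snd nn) * (Dvar i * Q)" if i: "i \<in> {1..n}" for i
  proof -
    have ray: "relation_term n v nn p c i
        = alim_smult (lpair (fst nn) (v i) + snd nn) (Phi n B (c(i := c i - 1)))"
      using i b0 matches by (simp add: relation_term_ray B_def)
    then have "fst (Phi n B (c(i := c i - 1))) \<le> m"
      using bound i by (force simp: alim_smult_def)
    then show ?thesis
      using ray Phi_rep_fun_upd_pred[where b = c, OF i c_bound[OF i]]
      by (simp add: alim_rep_smult alim_rep_Phi Q_def)
  qed
  ultimately have "(\<Sum>i\<in>{0..n}. alim_rep n m (relation_term n v nn p c i))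
      = of_int (snd nn) * (D0 n * Q) + (\<Sum>i=1..n. of_int (lpair (fst nn) (v i) + snd nn) * (Dvar i * Q))"
    by (simp add: sum.atLeast_Suc_atMost)
  also have "\<dots> = Q * (\<Sum>i=1..n. of_int (lpair (fst nn) (v i)) * Dvar i)"
    by (simp add: D0_def algebra_simps sum.distrib sum_distrib_left sum_negf)
  finally show ?thesis
    by (simp add: Q_def B_def)
qed

lemma relation_rep_boundary:
  assumes b0: "Psi_b0 n p c = 1" and matches: "ray_sum_matches n v p c"
    and bound: "fst (relation_term n v nn p c 0) \<le> m"
  shows "(\<Sum>i\<in>{0..n}. alim_rep n m (relation_term n v nn p c i))
       = of_int (snd nn) * (\<Prod>j=1..n. Dvar j ^ nat (int m - c j))"
proof -
  have apex: "relation_term n v nn p c 0 = alim_smult (snd nn) (Phi n 0 c)"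
    using b0 matches by (simp add: relation_term_apex)
  have "fst (Phi n 0 c) \<le> m"
    using apex bound by (simp add: alim_smult_def)
  then have "alim_rep n m (relation_term n v nn p c 0)
      = of_int (snd nn) * (\<Prod>j=1..n. Dvar j ^ nat (int m - c j))"
    using apex by (simp add: alim_rep_smult alim_rep_Phi Phi_rep_def)
  moreover have "alim_rep n m (relation_term n v nn p c i) = 0" if "i \<in> {1..n}" for i
    using that b0 by (simp add: relation_term_ray alim_rep_smult alim_rep_zero)
  ultimately show ?thesis
    by (simp add: sum.atLeast_Suc_atMost)
qed

lemma relation_rep_in_Aideal:
  assumes fin: "finite \<Sigma>" and nef: "anticanonical_nef n v \<Sigma>" and K: "in_K n v p"
    and bound: "\<forall>i\<in>{0..n}. fst (relation_term n v nn p c i) \<le> m"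
  shows "(\<Sum>i\<in>{0..n}. alim_rep n m (relation_term n v nn p c i)) \<in> Aideal n v \<Sigma> m"
proof -
  consider (linear) "Psi_b0 n p c \<le> 0" "ray_sum_matches n v p c"
    | (boundary) "Psi_b0 n p c = 1" "ray_sum_matches n v p c"
    | (vanishing) "\<not> (Psi_b0 n p c \<le> 1 \<and> ray_sum_matches n v p c)"
    by (cases "ray_sum_matches n v p c") (auto, linarith)
  then show ?thesis
  proof cases
    case linear
    show ?thesis
      unfolding relation_rep_linear[OF linear bound] by (rule linear_relation_in_Aideal)
  next
    case boundary
    have not_in_cone: "\<not> (\<exists>S\<in>\<Sigma>. {j\<in>{1..n}. nat (int m - c j) > m} \<subseteq> S)"
    proof
      assume "\<exists>S\<in>\<Sigma>. {j\<in>{1..n}. nat (int m - c j) > m} \<subseteq> S"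
      moreover have "{j\<in>{1..n}. c j < 0} \<subseteq> {j\<in>{1..n}. nat (int m - c j) > m}"
        by auto
      ultimately obtain S where "S \<in> \<Sigma>" "{j\<in>{1..n}. c j < 0} \<subseteq> S"
        by blast
      then have "Psi_b0 n p c \<le> 0"
        using Psi_b0_nonpos_if_negative_support_in_cone fin nef K boundary by blast
      then show False
        using boundary by simp
    qed
    have bound0: "fst (relation_term n v nn p c 0) \<le> m"
      using bound by simp
    show ?thesis
      unfolding relation_rep_boundary[OF boundary bound0] by (rule monomial_in_Aideal[OF not_in_cone])
  next
    case vanishing
    have "alim_rep n m (relation_term n v nn p c i) = 0" if "i \<in> {0..n}" for i
    proof (cases "i = 0")
      case True
      show ?thesis
        unfolding True relation_term_apex if_not_P[OF vanishing] by (simp add: alim_rep_smult alim_rep_zero)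
    next
      case False
      then have i: "i \<in> {1..n}"
        using that by simp
      have ray_vanishes: "\<not> (Psi_b0 n p c \<le> 0 \<and> ray_sum_matches n v p c)"
        using vanishing by auto
      show ?thesis
        unfolding relation_term_ray[OF i] if_not_P[OF ray_vanishes] by (simp add: alim_rep_smult alim_rep_zero)
    qed
    then show ?thesis
      using zero_in_Aideal by simp
  qed
qed

theorem proposition3p5:
  fixes n :: nat and v :: "nat \<Rightarrow> int^'d" and \<Sigma> :: "nat set set"
    and p :: "(int^'d) \<times> int" and nn :: "(int^'d) \<times> int" and c :: "nat \<Rightarrow> int"
  assumes "complete_simplicial_fan n v \<Sigma>"
    and "nef_Fano n v \<Sigma>"
    and "in_K n v p"
  shows "alim_zero n v \<Sigma>
           (alim_sum n (\<lambda>i. alim_smult (bpair nn (vbar v i))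
               (Psi_coeff n v (p + vbar v i) (if i = 0 then c else c(i := c i - 1)))) {0..n})"
proof -
  have fin: "finite \<Sigma>"
    using assms(1) by (rule complete_simplicial_fan_finite)
  have nef: "anticanonical_nef n v \<Sigma>"
    using assms(2) by (simp add: nef_Fano_def)
  have "alim_zero n v \<Sigma> (alim_sum n (relation_term n v nn p c) {0..n})"
  proof (rule alim_zero_alim_sum)
    fix m
    assume "\<forall>i\<in>{0..n}. fst (relation_term n v nn p c i) \<le> m"
    then show "(\<Sum>i\<in>{0..n}. alim_rep n m (relation_term n v nn p c i)) \<in> Aideal n v \<Sigma> m"
      by (rule relation_rep_in_Aideal[OF fin nef assms(3)])
  qed simp
  then show ?thesis
    unfolding relation_term_def[abs_def] .
qed

end
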